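(* Let $A,B$ be closed linear relations in $X^2$ such that $\{A,B\}$ is a dual pair with $(A^* )_s|_{D(B)}=B_s$ and $(B^* )_s|_{D(A)}=A_s$. If $B^*(0)\cap N(A^* )=\{0\}$ and $A^*(0)\cap N(B^* )=\{0\}$, then $n(A^*,B)=n(B^*,A)$, where $n(A^*,B)=\dim(D(A^* )/D(B))$ and $n(B^*,A)=\dim(D(B^* )/D(A))$.
   Context: $X$ is a complex Hilbert space; linear relations are linear subspaces of $X^2=X\times X$, with domain $D(T)$, $N(T)=\{x:(x,0)\in T\}$, $T(0)=\{y:(0,y)\in T\}$. Adjoint: $T^*=\{(f,g):\langle g,x\rangle=\langle f,y\rangle\ \forall(x,y)\in T\}$. For closed $T$: $T_\infty=\{(0,y)\in T\}$ and $T_s=T\ominus T_\infty$ (orthogonal complement in $T$), an operator with $D(T_s)=D(T)$. Closed relations $A,B$ form a dual pair if $A\subset B^*$ (equivalently $B\subset A^*$). $(A^* )_s|_{D(B)}=B_s$ means the restriction of the operator $(A^* )_s$ to $D(B)$ is $B_s$. *)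

theory Defs
  imports "HOL-Analysis.Analysis" "HOL-Library.Extended_Nat"
begin

text \<open>A complex Hilbert space: a real Banach space 'a equipped with a complex
scalar multiplication sC (extending the real one) and a complex inner product ip
(linear in the first, conjugate-linear in the second argument) inducing the norm.\<close>

locale complex_hilbert =
  fixes sC :: "complex \<Rightarrow> 'a::banach \<Rightarrow> 'a"
    and ip :: "'a \<Rightarrow> 'a \<Rightarrow> complex"
  assumes sC_add_right: "\<And>a x y. sC a (x + y) = sC a x + sC a y"
    and sC_add_left: "\<And>a b x. sC (a + b) x = sC a x + sC b x"
    and sC_sC: "\<And>a b x. sC a (sC b x) = sC (a * b) x"
    and sC_one: "\<And>x. sC 1 x = x"
    and sC_of_real: "\<And>r x. sC (complex_of_real r) x = scaleR r x"
    and ip_add_left: "\<And>x y z. ip (x + y) z = ip x z + ip y z"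
    and ip_sC_left: "\<And>a x y. ip (sC a x) y = a * ip x y"
    and ip_sym: "\<And>x y. ip y x = cnj (ip x y)"
    and ip_norm: "\<And>x. ip x x = complex_of_real ((norm x)\<^sup>2)"

definition lin_rel :: "(complex \<Rightarrow> 'a \<Rightarrow> 'a) \<Rightarrow> ('a::ab_group_add \<times> 'a) set \<Rightarrow> bool" where
  "lin_rel sC T \<longleftrightarrow> (0, 0) \<in> T
     \<and> (\<forall>p\<in>T. \<forall>q\<in>T. (fst p + fst q, snd p + snd q) \<in> T)
     \<and> (\<forall>c. \<forall>p\<in>T. (sC c (fst p), sC c (snd p)) \<in> T)"

definition closed_lin_rel :: "(complex \<Rightarrow> 'a \<Rightarrow> 'a) \<Rightarrow> ('a::real_normed_vector \<times> 'a) set \<Rightarrow> bool" where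
  "closed_lin_rel sC T \<longleftrightarrow> lin_rel sC T \<and> closed T"

definition rdom :: "('a \<times> 'a) set \<Rightarrow> 'a set" where
  "rdom T = {x. \<exists>y. (x, y) \<in> T}"

definition rker :: "('a::zero \<times> 'a) set \<Rightarrow> 'a set" where
  "rker T = {x. (x, 0) \<in> T}"

definition rmul :: "('a::zero \<times> 'a) set \<Rightarrow> 'a set" where
  "rmul T = {y. (0, y) \<in> T}"

definition radj :: "('a \<Rightarrow> 'a \<Rightarrow> complex) \<Rightarrow> ('a \<times> 'a) set \<Rightarrow> ('a \<times> 'a) set" where
  "radj ip T = {(f, g). \<forall>(x, y)\<in>T. ip g x = ip f y}"

definition pip :: "('a \<Rightarrow> 'a \<Rightarrow> complex) \<Rightarrow> 'a \<times> 'a \<Rightarrow> 'a \<times> 'a \<Rightarrow> complex" where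
  "pip ip p q = ip (fst p) (fst q) + ip (snd p) (snd q)"

definition rinf :: "('a::zero \<times> 'a) set \<Rightarrow> ('a \<times> 'a) set" where
  "rinf T = {p \<in> T. fst p = 0}"

definition rs :: "('a \<Rightarrow> 'a \<Rightarrow> complex) \<Rightarrow> ('a::zero \<times> 'a) set \<Rightarrow> ('a \<times> 'a) set" where
  "rs ip T = {p \<in> T. \<forall>q \<in> rinf T. pip ip p q = 0}"

definition rrestrict :: "('a \<times> 'a) set \<Rightarrow> 'a set \<Rightarrow> ('a \<times> 'a) set" where
  "rrestrict T S = {p \<in> T. fst p \<in> S}"

definition dual_pair :: "(complex \<Rightarrow> 'a \<Rightarrow> 'a) \<Rightarrow> ('a \<Rightarrow> 'a \<Rightarrow> complex)
    \<Rightarrow> ('a::real_normed_vector \<times> 'a) set \<Rightarrow> ('a \<times> 'a) set \<Rightarrow> bool" where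
  "dual_pair sC ip A B \<longleftrightarrow> closed_lin_rel sC A \<and> closed_lin_rel sC B \<and> A \<subseteq> radj ip B"

text \<open>Dimension of the quotient space V/M (M \<subseteq> V subspaces), valued in
  {0,1,2,...,\<infinity>}: the supremum of the sizes of finite subsets of V that are
  complex-linearly independent modulo M.\<close>
definition indep_mod :: "(complex \<Rightarrow> 'a \<Rightarrow> 'a) \<Rightarrow> 'a::comm_monoid_add set \<Rightarrow> 'a set \<Rightarrow> bool" where
  "indep_mod sC M L \<longleftrightarrow> finite L \<and>
     (\<forall>c. (\<Sum>l\<in>L. sC (c l) l) \<in> M \<longrightarrow> (\<forall>l\<in>L. c l = 0))"

definition quot_dim :: "(complex \<Rightarrow> 'a \<Rightarrow> 'a) \<Rightarrow> 'a::comm_monoid_add set \<Rightarrow> 'a set \<Rightarrow> enat" where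
  "quot_dim sC V M = Sup {enat (card L) | L. L \<subseteq> V \<and> indep_mod sC M L}"

end

theory Submission
  imports Defs
begin

text \<open>The key object is the boundary form \<open>[f, g] = \<langle>f', g\<rangle> - \<langle>f, g'\<rangle>\<close> for
\<open>(f, f') \<in> A\<^sup>*\<close> and \<open>(g, g') \<in> B\<^sup>*\<close>. The hypotheses force \<open>A\<^sup>*(0) \<subseteq> B(0)\<close> and
\<open>B\<^sup>*(0) \<subseteq> A(0)\<close>: project \<open>y \<in> A\<^sup>*(0)\<close> onto the closed subspace \<open>B(0)\<close>; since \<open>(A\<^sup>*)\<^sub>s\<close>
and \<open>B\<^sub>s\<close> agree on \<open>D(B)\<close>, the residual lies in \<open>A\<^sup>*(0) \<inter> N(B\<^sup>*) = {0}\<close>. These inclusions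
make the form independent of the choice of \<open>f'\<close> and \<open>g'\<close>. It is sesquilinear on
\<open>D(A\<^sup>*) \<times> D(B\<^sup>*)\<close>, vanishes on \<open>D(A\<^sup>*) \<times> D(A)\<close> because \<open>A \<subseteq> B\<^sup>*\<close>, and its left kernel is
\<open>D(B)\<close> because \<open>B\<^sup>*\<^sup>* = B\<close>. For such a pairing every finite family in \<open>D(A\<^sup>*)\<close> that is
independent modulo \<open>D(B)\<close> has a biorthogonal family in \<open>D(B\<^sup>*)\<close>, which is independent modulo
\<open>D(A)\<close>. Hence \<open>n(A\<^sup>*, B) \<le> n(B\<^sup>*, A)\<close>, and the reverse inequality follows by symmetry.\<close>

definition csubspace :: "(complex \<Rightarrow> 'a \<Rightarrow> 'a) \<Rightarrow> 'a::ab_group_add set \<Rightarrow> bool" where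
  "csubspace sC M \<longleftrightarrow> 0 \<in> M \<and> (\<forall>x\<in>M. \<forall>y\<in>M. x + y \<in> M) \<and> (\<forall>c. \<forall>x\<in>M. sC c x \<in> M)"

context complex_hilbert
begin

lemma sC_zero_left [simp]: "sC 0 x = 0"
  using sC_of_real[of 0 x] by simp

lemma sC_zero_right [simp]: "sC a 0 = 0"
  using sC_add_right[of a 0 0] by simp

lemma sC_minus_one: "sC (-1) x = - x"
  using sC_add_left[of 1 "-1" x] by (simp add: sC_one eq_neg_iff_add_eq_0 add.commute)

lemma ip_zero_left [simp]: "ip 0 y = 0"
  using ip_add_left[of 0 0 y] by simp

lemma ip_add_right: "ip x (y + z) = ip x y + ip x z"
proof -
  have "ip x (y + z) = cnj (ip y x + ip z x)"
    by (subst ip_sym) (simp add: ip_add_left)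
  then show ?thesis
    by (simp only: complex_cnj_add complex_cnj_cnj ip_sym[of y x] ip_sym[of z x])
qed

lemma ip_zero_right [simp]: "ip x 0 = 0"
  using ip_add_right[of x 0 0] by simp

lemma ip_sC_right: "ip x (sC a y) = cnj a * ip x y"
proof -
  have "ip x (sC a y) = cnj (a * ip y x)"
    by (subst ip_sym) (simp add: ip_sC_left)
  then show ?thesis
    by (simp only: complex_cnj_mult complex_cnj_cnj ip_sym[of y x])
qed

lemma ip_minus_left: "ip (- x) y = - ip x y"
  using ip_add_left[of x "-x" y] by (simp add: eq_neg_iff_add_eq_0 add.commute)

lemma ip_minus_right: "ip x (- y) = - ip x y"
  using ip_add_right[of x y "-y"] by (simp add: eq_neg_iff_add_eq_0 add.commute)

lemma ip_diff_left: "ip (x - y) z = ip x z - ip y z"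
  using ip_add_left[of x "-y" z] by (simp add: ip_minus_left)

lemma ip_diff_right: "ip x (y - z) = ip x y - ip x z"
  using ip_add_right[of x y "-z"] by (simp add: ip_minus_right)

lemma ip_self_eq_0_iff: "ip x x = 0 \<longleftrightarrow> x = 0"
  using ip_norm[of x] by simp

lemma parallelogram_law:
  fixes x y :: 'a
  shows "(norm (x + y))\<^sup>2 + (norm (x - y))\<^sup>2 = 2 * (norm x)\<^sup>2 + 2 * (norm y)\<^sup>2"
proof -
  have "complex_of_real ((norm (x + y))\<^sup>2 + (norm (x - y))\<^sup>2) = ip (x + y) (x + y) + ip (x - y) (x - y)"
    by (simp add: ip_norm)
  also have "\<dots> = 2 * ip x x + 2 * ip y y"
    by (simp add: ip_add_left ip_add_right ip_diff_left ip_diff_right)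
  also have "\<dots> = complex_of_real (2 * (norm x)\<^sup>2 + 2 * (norm y)\<^sup>2)"
    by (simp add: ip_norm)
  finally show ?thesis
    by (simp only: of_real_eq_iff)
qed

lemma csubspaceD:
  assumes "csubspace sC M"
  shows "0 \<in> M" "x \<in> M \<Longrightarrow> y \<in> M \<Longrightarrow> x + y \<in> M" "x \<in> M \<Longrightarrow> sC c x \<in> M"
    "x \<in> M \<Longrightarrow> scaleR r x \<in> M"
  using assms by (simp_all add: csubspace_def flip: sC_of_real)

lemma csubspace_sum:
  assumes "csubspace sC M" "\<And>i. i \<in> S \<Longrightarrow> f i \<in> M"
  shows "sum f S \<in> M"
  using assms(2) by (induct S rule: infinite_finite_induct) (simp_all add: csubspaceD[OF assms(1)])

lemma nearest_point_orthogonal: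
  assumes M: "csubspace sC M" and m: "m \<in> M"
    and nearest: "\<And>m'. m' \<in> M \<Longrightarrow> norm (y - m) \<le> norm (y - m')"
    and z: "z \<in> M"
  shows "ip (y - m) z = 0"
proof (cases "z = 0")
  case False
  define r a b where "r = y - m" and "a = ip r z" and "b = (norm z)\<^sup>2"
  \<comment> \<open>\<open>t\<close> minimises \<open>\<parallel>r - t z\<parallel>\<close>, and the minimum is \<open>\<parallel>r\<parallel>\<^sup>2 - \<bar>a\<bar>\<^sup>2 / b\<close>\<close>
  define t where "t = a / complex_of_real b"
  have b_pos: "b > 0"
    using False by (simp add: b_def)
  have "complex_of_real ((norm (r - sC t z))\<^sup>2) = ip (r - sC t z) (r - sC t z)"
    by (simp add: ip_norm)
  also have "\<dots> = ip r r - cnj t * a - t * cnj a + t * cnj t * b"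
    using ip_sym[of z r] ip_norm[of z]
    by (simp add: ip_diff_left ip_diff_right ip_sC_left ip_sC_right a_def b_def algebra_simps)
  also have "\<dots> = ip r r - a * cnj a / b"
    using b_pos by (simp add: t_def field_simps)
  also have "a * cnj a = complex_of_real ((cmod a)\<^sup>2)"
    using complex_norm_square[of a] by simp
  finally have "complex_of_real ((norm (r - sC t z))\<^sup>2) = complex_of_real ((norm r)\<^sup>2 - (cmod a)\<^sup>2 / b)"
    by (simp add: ip_norm)
  then have "(norm (r - sC t z))\<^sup>2 = (norm r)\<^sup>2 - (cmod a)\<^sup>2 / b"
    by (simp only: of_real_eq_iff)
  moreover have "(norm r)\<^sup>2 \<le> (norm (r - sC t z))\<^sup>2"
    using nearest[of "m + sC t z"] csubspaceD[OF M] m z by (simp add: r_def diff_diff_eq power_mono)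
  ultimately have "(cmod a)\<^sup>2 / b \<le> 0"
    by simp
  then show ?thesis
    using b_pos by (simp add: divide_le_0_iff a_def r_def)
qed simp

lemma nearest_points_close:
  assumes M: "csubspace sC M" and "a \<in> M" "b \<in> M"
  shows "(norm (a - b))\<^sup>2 \<le> 2 * (norm (y - a))\<^sup>2 + 2 * (norm (y - b))\<^sup>2 - 4 * (infdist y M)\<^sup>2"
proof -
  define c where "c = scaleR (1/2) (a + b)"
  have "c \<in> M"
    using assms by (simp add: c_def csubspaceD[OF M])
  then have "infdist y M \<le> norm (y - c)"
    using infdist_le[of c M y] by (simp add: dist_norm)
  then have "(infdist y M)\<^sup>2 \<le> (norm (y - c))\<^sup>2"
    using infdist_nonneg by (rule power_mono)
  moreover have "(y - a) + (y - b) = scaleR 2 (y - c)" "(y - a) - (y - b) = b - a"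
    by (simp_all add: c_def algebra_simps scaleR_2)
  then have "4 * (norm (y - c))\<^sup>2 + (norm (a - b))\<^sup>2 = 2 * (norm (y - a))\<^sup>2 + 2 * (norm (y - b))\<^sup>2"
    using parallelogram_law[of "y - a" "y - b"] by (simp add: power_mult_distrib norm_minus_commute)
  ultimately show ?thesis
    by linarith
qed

lemma minimizing_sequence_exists:
  assumes "csubspace sC M"
  obtains X where "\<And>n. X n \<in> M" "\<And>n. (norm (y - X n))\<^sup>2 < (infdist y M)\<^sup>2 + 1 / real (Suc n)"
proof -
  define d where "d = infdist y M"
  have "M \<noteq> {}"
    using csubspaceD(1)[OF assms] by blast
  have "\<exists>m\<in>M. (norm (y - m))\<^sup>2 < d\<^sup>2 + 1 / real (Suc n)" for n
  proof -
    have "d < sqrt (d\<^sup>2 + 1 / real (Suc n))"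
      by (rule real_less_rsqrt) simp
    moreover have "\<exists>m\<in>M. dist y m < s" if "d < s" for s
      using that \<open>M \<noteq> {}\<close> by (simp add: d_def infdist_notempty cINF_less_iff)
    ultimately obtain m where "m \<in> M" "norm (y - m) < sqrt (d\<^sup>2 + 1 / real (Suc n))"
      by (auto simp: dist_norm)
    moreover have "(sqrt (d\<^sup>2 + 1 / real (Suc n)))\<^sup>2 = d\<^sup>2 + 1 / real (Suc n)"
      by simp
    ultimately show ?thesis
      using power_strict_mono[of "norm (y - m)" "sqrt (d\<^sup>2 + 1 / real (Suc n))" 2] by auto
  qed
  then have "\<exists>X. \<forall>n. X n \<in> M \<and> (norm (y - X n))\<^sup>2 < d\<^sup>2 + 1 / real (Suc n)"
    by (intro choice) blast
  then show thesis
    using that by (auto simp: d_def)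
qed

lemma minimizing_sequence_Cauchy:
  assumes M: "csubspace sC M"
    and X: "\<And>n. X n \<in> M" "\<And>n. (norm (y - X n))\<^sup>2 < (infdist y M)\<^sup>2 + 1 / real (Suc n)"
  shows "Cauchy X"
proof (rule metric_CauchyI)
  fix e :: real
  assume "e > 0"
  obtain N :: nat where "4 / e\<^sup>2 < real N"
    using reals_Archimedean2 by blast
  then have N: "4 / e\<^sup>2 < real (Suc N)"
    by simp
  have "dist (X m) (X n) < e" if "N \<le> m" "N \<le> n" for m n
  proof -
    have "(norm (X m - X n))\<^sup>2 \<le> 2 / real (Suc m) + 2 / real (Suc n)"
      using nearest_points_close[OF M X(1)[of m] X(1)[of n], where y = y] X(2)[of m] X(2)[of n] by simp
    also have "\<dots> \<le> 2 / real (Suc N) + 2 / real (Suc N)"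
      using that by (intro add_mono frac_le) auto
    also have "\<dots> = 4 / real (Suc N)"
      by simp
    also have "\<dots> < e\<^sup>2"
      using N \<open>e > 0\<close> by (simp add: divide_less_eq pos_divide_less_eq mult.commute)
    finally show ?thesis
      using \<open>e > 0\<close> by (simp add: dist_norm power_less_imp_less_base)
  qed
  then show "\<exists>N. \<forall>m\<ge>N. \<forall>n\<ge>N. dist (X m) (X n) < e"
    by blast
qed

lemma nearest_point_exists:
  assumes M: "csubspace sC M" "closed M"
  obtains m where "m \<in> M" "\<And>m'. m' \<in> M \<Longrightarrow> norm (y - m) \<le> norm (y - m')"
proof -
  define d where "d = infdist y M"
  obtain X where X: "\<And>n. X n \<in> M" "\<And>n. (norm (y - X n))\<^sup>2 < d\<^sup>2 + 1 / real (Suc n)"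
    using minimizing_sequence_exists[OF M(1), where y = y] unfolding d_def by blast
  have "Cauchy X"
    using M(1) X unfolding d_def by (rule minimizing_sequence_Cauchy)
  then obtain m where lim: "X \<longlonglongrightarrow> m"
    by (auto simp: Cauchy_convergent_iff convergent_def)
  have "m \<in> M"
    using closed_sequentially[OF M(2)] X(1) lim by blast
  have lim_norm: "(\<lambda>n. (norm (y - X n))\<^sup>2) \<longlonglongrightarrow> (norm (y - m))\<^sup>2"
    by (intro tendsto_intros lim)
  have lim_bound: "(\<lambda>n. d\<^sup>2 + 1 / real (Suc n)) \<longlonglongrightarrow> d\<^sup>2 + 0"
    by (intro tendsto_intros LIMSEQ_inverse_real_of_nat[unfolded inverse_eq_divide])
  have "\<exists>N. \<forall>n\<ge>N. (norm (y - X n))\<^sup>2 \<le> d\<^sup>2 + 1 / real (Suc n)"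
    using X(2) less_imp_le by blast
  then have "(norm (y - m))\<^sup>2 \<le> d\<^sup>2 + 0"
    by (rule LIMSEQ_le[OF lim_norm lim_bound])
  then have "(norm (y - m))\<^sup>2 \<le> d\<^sup>2"
    by simp
  then have "norm (y - m) \<le> d"
    by (rule power2_le_imp_le) (simp add: d_def infdist_nonneg)
  moreover have "d \<le> norm (y - m')" if "m' \<in> M" for m'
    using infdist_le[OF that, of y] by (simp add: d_def dist_norm)
  ultimately have "norm (y - m) \<le> norm (y - m')" if "m' \<in> M" for m'
    using that by fastforce
  with \<open>m \<in> M\<close> show thesis
    by (rule that)
qed

lemma orthogonal_projection_exists:
  assumes "csubspace sC M" "closed M"
  obtains m where "m \<in> M" "\<And>z. z \<in> M \<Longrightarrow> ip (y - m) z = 0"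
proof -
  obtain m where "m \<in> M" "\<And>m'. m' \<in> M \<Longrightarrow> norm (y - m) \<le> norm (y - m')"
    using nearest_point_exists[OF assms, where y = y] by blast
  then show thesis
    by (intro that[of m]) (simp_all add: nearest_point_orthogonal[OF assms(1)])
qed

end

definition psC :: "(complex \<Rightarrow> 'a \<Rightarrow> 'a) \<Rightarrow> complex \<Rightarrow> 'a \<times> 'a \<Rightarrow> 'a \<times> 'a" where
  "psC sC c p = (sC c (fst p), sC c (snd p))"

lemma complex_hilbert_prod:
  assumes "complex_hilbert sC ip"
  shows "complex_hilbert (psC sC) (pip ip)"
proof -
  interpret complex_hilbert sC ip by fact
  show ?thesis
  proof
    fix a b :: complex and x y z :: "'a \<times> 'a" and r :: real
    show "psC sC a (x + y) = psC sC a x + psC sC a y"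
      by (simp add: psC_def sC_add_right)
    show "psC sC (a + b) x = psC sC a x + psC sC b x"
      by (simp add: psC_def sC_add_left)
    show "psC sC a (psC sC b x) = psC sC (a * b) x"
      by (simp add: psC_def sC_sC)
    show "psC sC 1 x = x"
      by (simp add: psC_def sC_one)
    show "psC sC (complex_of_real r) x = scaleR r x"
      by (simp add: psC_def sC_of_real prod_eq_iff)
    show "pip ip (x + y) z = pip ip x z + pip ip y z"
      by (simp add: pip_def ip_add_left)
    show "pip ip (psC sC a x) y = a * pip ip x y"
      by (simp add: pip_def psC_def ip_sC_left algebra_simps)
    show "pip ip y x = cnj (pip ip x y)"
      using ip_sym[of "fst x" "fst y"] ip_sym[of "snd x" "snd y"] by (simp add: pip_def)
    show "pip ip x x = complex_of_real ((norm x)\<^sup>2)"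
      by (simp add: pip_def ip_norm norm_prod_def)
  qed
qed

lemma lin_rel_iff_csubspace: "lin_rel sC T \<longleftrightarrow> csubspace (psC sC) T"
  by (simp add: lin_rel_def csubspace_def psC_def zero_prod_def plus_prod_def)

lemma lin_rel_add: "lin_rel sC T \<Longrightarrow> (a, b) \<in> T \<Longrightarrow> (c, d) \<in> T \<Longrightarrow> (a + c, b + d) \<in> T"
  unfolding lin_rel_def by (metis fst_conv snd_conv)

lemma lin_rel_sC: "lin_rel sC T \<Longrightarrow> (a, b) \<in> T \<Longrightarrow> (sC k a, sC k b) \<in> T"
  unfolding lin_rel_def by (metis fst_conv snd_conv)

context complex_hilbert
begin

lemma lin_rel_diff: "lin_rel sC T \<Longrightarrow> (a, b) \<in> T \<Longrightarrow> (c, d) \<in> T \<Longrightarrow> (a - c, b - d) \<in> T"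
  using lin_rel_add[of sC T a b "sC (-1) c" "sC (-1) d"] lin_rel_sC[of sC T c d "-1"]
  by (simp add: sC_minus_one)

lemma lin_rel_zero: "lin_rel sC T \<Longrightarrow> (0, 0) \<in> T"
  by (simp add: lin_rel_def)

lemma csubspace_rdom: "lin_rel sC T \<Longrightarrow> csubspace sC (rdom T)"
  unfolding csubspace_def rdom_def by (blast intro: lin_rel_zero lin_rel_add lin_rel_sC)

lemma csubspace_rmul: "lin_rel sC T \<Longrightarrow> csubspace sC (rmul T)"
  unfolding csubspace_def rmul_def
  by (auto intro: lin_rel_zero dest: lin_rel_add[of sC T 0 _ 0] lin_rel_sC[of sC T 0 _])

lemma closed_rmul:
  fixes T :: "('a \<times> 'a) set"
  assumes "closed T"
  shows "closed (rmul T)"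
proof -
  have "closed ((\<lambda>y. (0, y)) -` T)"
    by (rule continuous_closed_vimage[OF assms]) (intro continuous_intros)
  then show ?thesis
    by (simp add: rmul_def vimage_def)
qed

lemma radj_iff: "(f, g) \<in> radj ip T \<longleftrightarrow> (\<forall>x y. (x, y) \<in> T \<longrightarrow> ip g x = ip f y)"
  by (auto simp: radj_def)

lemma lin_rel_radj: "lin_rel sC (radj ip T)"
  unfolding lin_rel_def by (auto simp: radj_iff ip_add_left ip_add_right ip_sC_left)

lemma radj_swap:
  assumes "A \<subseteq> radj ip B"
  shows "B \<subseteq> radj ip A"
proof clarify
  fix x y
  assume "(x, y) \<in> B"
  have "ip y a = ip x b" if "(a, b) \<in> A" for a b
  proof -
    have "ip b x = ip a y"
      using assms that \<open>(x, y) \<in> B\<close> by (auto simp: radj_iff)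
    then show ?thesis
      by (simp add: ip_sym[of a y] ip_sym[of b x])
  qed
  then show "(x, y) \<in> radj ip A"
    by (simp add: radj_iff)
qed

lemma radj_radj_subset:
  assumes "closed_lin_rel sC T"
  shows "radj ip (radj ip T) \<subseteq> T"
proof
  fix u
  assume u: "u \<in> radj ip (radj ip T)"
  interpret P: complex_hilbert "psC sC" "pip ip"
    by (rule complex_hilbert_prod) (rule complex_hilbert_axioms)
  have "csubspace (psC sC) T" "closed T"
    using assms by (auto simp: closed_lin_rel_def lin_rel_iff_csubspace)
  then obtain t where "t \<in> T" and orth: "\<And>q. q \<in> T \<Longrightarrow> pip ip (u - t) q = 0"
    using P.orthogonal_projection_exists[where y = u] by blast
  obtain r1 r2 where r: "u - t = (r1, r2)"
    by (cases "u - t")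
  \<comment> \<open>orthogonality of \<open>(r1, r2)\<close> to \<open>T\<close> says exactly that \<open>(- r2, r1) \<in> T\<^sup>*\<close>\<close>
  have "(- r2, r1) \<in> radj ip T"
    using orth r by (auto simp: radj_iff pip_def ip_minus_left eq_neg_iff_add_eq_0)
  then have "ip (fst u) r1 = ip (snd u) (- r2)"
    using u by (cases u) (simp add: radj_iff)
  then have "pip ip u (u - t) = 0"
    by (simp add: r pip_def ip_minus_right)
  moreover have "pip ip t (u - t) = 0"
    using P.ip_sym[of "u - t" t] orth[OF \<open>t \<in> T\<close>] by simp
  ultimately have "pip ip (u - t) (u - t) = 0"
    by (simp add: P.ip_diff_left)
  then show "u \<in> T"
    using \<open>t \<in> T\<close> P.ip_self_eq_0_iff by simp
qed

lemma rs_if_orthogonal_rmul: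
  assumes "(x, y) \<in> T" "\<And>z. z \<in> rmul T \<Longrightarrow> ip y z = 0"
  shows "(x, y) \<in> rs ip T"
  using assms by (auto simp: rs_def rinf_def rmul_def pip_def)

lemma rker_radj_if_orthogonal_rmul:
  assumes B: "closed_lin_rel sC B"
    and restrict: "rrestrict (rs ip (radj ip A)) (rdom B) = rs ip B"
    and r: "(0, r) \<in> radj ip A" "\<And>z. z \<in> rmul B \<Longrightarrow> ip r z = 0"
  shows "r \<in> rker (radj ip B)"
proof -
  have "lin_rel sC B" "csubspace sC (rmul B)" "closed (rmul B)"
    using B by (auto simp: closed_lin_rel_def csubspace_rmul closed_rmul)
  have "ip r y = 0" if "(x, y) \<in> B" for x y
  proof -
    obtain m where m: "m \<in> rmul B" "\<And>z. z \<in> rmul B \<Longrightarrow> ip (y - m) z = 0"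
      using orthogonal_projection_exists[OF \<open>csubspace sC (rmul B)\<close> \<open>closed (rmul B)\<close>, where y = y]
      by blast
    have "(x, y - m) \<in> B"
      using lin_rel_diff[OF \<open>lin_rel sC B\<close> that, of 0 m] m(1) by (simp add: rmul_def)
    then have "(x, y - m) \<in> rs ip B"
      using m(2) by (simp add: rs_if_orthogonal_rmul)
    then have "(x, y - m) \<in> rs ip (radj ip A)"
      using restrict by (auto simp: rrestrict_def)
    then have "ip (y - m) r = 0"
      using r(1) by (auto simp: rs_def rinf_def pip_def)
    then have "ip r (y - m) = 0"
      using ip_sym[of r "y - m"] by simp
    then show ?thesis
      using r(2)[OF m(1)] by (simp add: ip_diff_right)
  qed
  then show ?thesis
    by (auto simp: rker_def radj_iff)
qed

lemma rmul_radj_subset: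
  assumes B: "closed_lin_rel sC B" and BA: "B \<subseteq> radj ip A"
    and restrict: "rrestrict (rs ip (radj ip A)) (rdom B) = rs ip B"
    and trivial: "rmul (radj ip A) \<inter> rker (radj ip B) = {0}"
  shows "rmul (radj ip A) \<subseteq> rmul B"
proof
  fix y
  assume y: "y \<in> rmul (radj ip A)"
  have "csubspace sC (rmul B)" "closed (rmul B)"
    using B by (auto simp: closed_lin_rel_def csubspace_rmul closed_rmul)
  then obtain m where m: "m \<in> rmul B" "\<And>z. z \<in> rmul B \<Longrightarrow> ip (y - m) z = 0"
    using orthogonal_projection_exists[where y = y] by blast
  have "(0, y - m) \<in> radj ip A"
    using lin_rel_diff[OF lin_rel_radj[of A], of 0 y 0 m] y m(1) BA by (auto simp: rmul_def)
  then have "y - m \<in> rmul (radj ip A) \<inter> rker (radj ip B)"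
    using rker_radj_if_orthogonal_rmul[OF B restrict _ m(2)] by (simp add: rmul_def)
  then show "y \<in> rmul B"
    using trivial m(1) by simp
qed

lemma csubspace_combination:
  assumes "csubspace sC M" "a \<in> M" "\<And>l. l \<in> L \<Longrightarrow> f l \<in> M"
  shows "a + (\<Sum>l\<in>L. sC (c l) (f l)) \<in> M"
  using assms by (intro csubspaceD(2) csubspace_sum csubspaceD(3)) auto

lemma indep_mod_subset:
  assumes "indep_mod sC M L" "K \<subseteq> L"
  shows "indep_mod sC M K"
  unfolding indep_mod_def
proof (intro conjI allI impI ballI)
  show "finite K"
    using assms finite_subset by (auto simp: indep_mod_def)
  fix c k
  assume "(\<Sum>l\<in>K. sC (c l) l) \<in> M" "k \<in> K"
  define c' where "c' l = (if l \<in> K then c l else 0)" for l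
  have "(\<Sum>l\<in>L. sC (c' l) l) = (\<Sum>l\<in>K. sC (c l) l)"
    using assms by (intro sum.mono_neutral_cong_right) (auto simp: indep_mod_def c'_def)
  then have "(\<Sum>l\<in>L. sC (c' l) l) \<in> M"
    using \<open>(\<Sum>l\<in>K. sC (c l) l) \<in> M\<close> by simp
  then have "c' k = 0"
    using assms \<open>k \<in> K\<close> unfolding indep_mod_def by blast
  then show "c k = 0"
    using \<open>k \<in> K\<close> by (simp add: c'_def)
qed

lemma indep_mod_insert_combination_notin:
  assumes indep: "indep_mod sC M (insert a L)" and "a \<notin> L"
  shows "a + (\<Sum>l\<in>L. sC (c l) l) \<notin> M"
proof
  assume "a + (\<Sum>l\<in>L. sC (c l) l) \<in> M"
  moreover have "(\<Sum>l\<in>L. sC ((c(a := 1)) l) l) = (\<Sum>l\<in>L. sC (c l) l)"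
    using \<open>a \<notin> L\<close> by (intro sum.cong) auto
  then have "(\<Sum>l\<in>insert a L. sC ((c(a := 1)) l) l) = a + (\<Sum>l\<in>L. sC (c l) l)"
    using indep \<open>a \<notin> L\<close> by (simp add: indep_mod_def sC_one)
  ultimately have "(c(a := 1)) a = 0"
    using indep unfolding indep_mod_def by (metis insertI1)
  then show False
    by simp
qed

end

locale sesquilinear_pairing = complex_hilbert sC ip
  for sC :: "complex \<Rightarrow> 'a::banach \<Rightarrow> 'a" and ip +
  fixes V W M :: "'a set" and phi :: "'a \<Rightarrow> 'a \<Rightarrow> complex"
  assumes csubspace_V: "csubspace sC V" and csubspace_W: "csubspace sC W"
    and phi_add_left: "\<And>v1 v2 w. v1 \<in> V \<Longrightarrow> v2 \<in> V \<Longrightarrow> w \<in> W \<Longrightarrow> phi (v1 + v2) w = phi v1 w + phi v2 w"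
    and phi_sC_left: "\<And>c v w. v \<in> V \<Longrightarrow> w \<in> W \<Longrightarrow> phi (sC c v) w = c * phi v w"
    and phi_add_right: "\<And>v w1 w2. v \<in> V \<Longrightarrow> w1 \<in> W \<Longrightarrow> w2 \<in> W \<Longrightarrow> phi v (w1 + w2) = phi v w1 + phi v w2"
    and phi_sC_right: "\<And>c v w. v \<in> V \<Longrightarrow> w \<in> W \<Longrightarrow> phi v (sC c w) = cnj c * phi v w"
    and phi_nondegenerate: "\<And>v. v \<in> V \<Longrightarrow> (\<And>w. w \<in> W \<Longrightarrow> phi v w = 0) \<Longrightarrow> v \<in> M"
begin

lemma phi_combination_left:
  assumes "finite L" "L \<subseteq> V" "a \<in> V" "w \<in> W"
  shows "phi (a + (\<Sum>l\<in>L. sC (c l) l)) w = phi a w + (\<Sum>l\<in>L. c l * phi l w)"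
  using assms(1-3)
proof (induction L arbitrary: a rule: finite_induct)
  case (insert x F)
  have "x \<in> V" "F \<subseteq> V" "a + sC (c x) x \<in> V"
    using insert.prems csubspaceD[OF csubspace_V] by simp_all
  have "phi (a + (\<Sum>l\<in>insert x F. sC (c l) l)) w = phi ((a + sC (c x) x) + (\<Sum>l\<in>F. sC (c l) l)) w"
    using insert.hyps by (simp add: add.assoc)
  also have "\<dots> = phi (a + sC (c x) x) w + (\<Sum>l\<in>F. c l * phi l w)"
    using insert.IH \<open>F \<subseteq> V\<close> \<open>a + sC (c x) x \<in> V\<close> by blast
  also have "\<dots> = phi a w + (\<Sum>l\<in>insert x F. c l * phi l w)"
    using insert.hyps insert.prems \<open>x \<in> V\<close> assms(4) csubspaceD(3)[OF csubspace_V]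
    by (simp add: phi_add_left phi_sC_left add.assoc)
  finally show ?case .
qed simp

lemma phi_combination_right:
  assumes "finite L" "f ` L \<subseteq> W" "v \<in> V" "w \<in> W"
  shows "phi v (w + (\<Sum>l\<in>L. sC (c l) (f l))) = phi v w + (\<Sum>l\<in>L. cnj (c l) * phi v (f l))"
  using assms(1,2,4)
proof (induction L arbitrary: w rule: finite_induct)
  case (insert x F)
  have "f x \<in> W" "w + sC (c x) (f x) \<in> W"
    using insert.prems csubspaceD[OF csubspace_W] by simp_all
  have "phi v (w + (\<Sum>l\<in>insert x F. sC (c l) (f l))) = phi v ((w + sC (c x) (f x)) + (\<Sum>l\<in>F. sC (c l) (f l)))"
    using insert.hyps by (simp add: add.assoc)
  also have "\<dots> = phi v (w + sC (c x) (f x)) + (\<Sum>l\<in>F. cnj (c l) * phi v (f l))"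
    using insert.IH insert.prems \<open>w + sC (c x) (f x) \<in> W\<close> by blast
  also have "\<dots> = phi v w + (\<Sum>l\<in>insert x F. cnj (c l) * phi v (f l))"
    using insert.hyps insert.prems \<open>f x \<in> W\<close> assms(3) csubspaceD(3)[OF csubspace_W]
    by (simp add: phi_add_right phi_sC_right add.assoc)
  finally show ?case .
qed simp

lemma exists_dual_vector:
  assumes L: "finite L" "insert a L \<subseteq> V" "a \<notin> L" and indep: "indep_mod sC M (insert a L)"
    and w: "w ` L \<subseteq> W" "\<And>l l'. l \<in> L \<Longrightarrow> l' \<in> L \<Longrightarrow> phi l (w l') = of_bool (l = l')"
  obtains z where "z \<in> W" "phi a z = 1" "\<And>l. l \<in> L \<Longrightarrow> phi l z = 0"
proof -
  \<comment> \<open>make \<open>a\<close> orthogonal to the \<open>w l\<close> and \<open>z0\<close> orthogonal to \<open>L\<close>; then \<open>phi a z = phi a' z0 \<noteq> 0\<close>\<close>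
  define a' where "a' = a + (\<Sum>l\<in>L. sC (- phi a (w l)) l)"
  have "a \<in> V" "L \<subseteq> V"
    using L by auto
  have "a' \<in> V"
    unfolding a'_def using \<open>a \<in> V\<close> \<open>L \<subseteq> V\<close> by (intro csubspace_combination[OF csubspace_V]) auto
  have a'_w: "phi a' (w l) = 0" if "l \<in> L" for l
  proof -
    have "w l \<in> W"
      using that w(1) by auto
    then show ?thesis
      unfolding a'_def phi_combination_left[OF L(1) \<open>L \<subseteq> V\<close> \<open>a \<in> V\<close> \<open>w l \<in> W\<close>]
      using that w L(1) by (simp add: sum_negf)
  qed
  have "a' \<notin> M"
    unfolding a'_def by (rule indep_mod_insert_combination_notin[OF indep L(3)])
  then obtain z0 where "z0 \<in> W" "phi a' z0 \<noteq> 0"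
    using phi_nondegenerate[OF \<open>a' \<in> V\<close>] by blast
  define z where "z = z0 + (\<Sum>l\<in>L. sC (cnj (- phi l z0)) (w l))"
  have "z \<in> W"
    unfolding z_def using \<open>z0 \<in> W\<close> w(1) by (intro csubspace_combination[OF csubspace_W]) auto
  have z_L: "phi l z = 0" if "l \<in> L" for l
  proof -
    have "l \<in> V"
      using that L by auto
    then show ?thesis
      unfolding z_def phi_combination_right[OF L(1) w(1) \<open>l \<in> V\<close> \<open>z0 \<in> W\<close>]
      using that L w by (simp add: sum_negf)
  qed
  have "phi a z = phi a' z"
    unfolding a'_def phi_combination_left[OF L(1) \<open>L \<subseteq> V\<close> \<open>a \<in> V\<close> \<open>z \<in> W\<close>]
    using z_L by simp
  also have "\<dots> = phi a' z0"
    unfolding z_def phi_combination_right[OF L(1) w(1) \<open>a' \<in> V\<close> \<open>z0 \<in> W\<close>]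
    using a'_w by simp
  finally have "phi a z \<noteq> 0"
    using \<open>phi a' z0 \<noteq> 0\<close> by simp
  show thesis
  proof (rule that)
    show "sC (cnj (1 / phi a z)) z \<in> W"
      using \<open>z \<in> W\<close> by (rule csubspaceD(3)[OF csubspace_W])
    show "phi a (sC (cnj (1 / phi a z)) z) = 1"
      using \<open>phi a z \<noteq> 0\<close> \<open>a \<in> V\<close> \<open>z \<in> W\<close> by (simp add: phi_sC_right)
    show "phi l (sC (cnj (1 / phi a z)) z) = 0" if "l \<in> L" for l
      using that \<open>L \<subseteq> V\<close> \<open>z \<in> W\<close> z_L by (auto simp: phi_sC_right)
  qed
qed

lemma biorthogonal_exists:
  assumes "L \<subseteq> V" "indep_mod sC M L"
  obtains w where "w ` L \<subseteq> W" "\<And>l l'. l \<in> L \<Longrightarrow> l' \<in> L \<Longrightarrow> phi l (w l') = of_bool (l = l')"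
proof -
  have "finite L"
    using assms(2) by (simp add: indep_mod_def)
  then have "\<exists>w. w ` L \<subseteq> W \<and> (\<forall>l\<in>L. \<forall>l'\<in>L. phi l (w l') = of_bool (l = l'))"
    using assms
  proof (induction L rule: finite_induct)
    case (insert a L)
    have "L \<subseteq> V" "indep_mod sC M L"
      using insert.prems indep_mod_subset by auto
    then obtain w where w: "w ` L \<subseteq> W" "\<forall>l\<in>L. \<forall>l'\<in>L. phi l (w l') = of_bool (l = l')"
      using insert.IH by blast
    then obtain z where z: "z \<in> W" "phi a z = 1" "\<And>l. l \<in> L \<Longrightarrow> phi l z = 0"
      using exists_dual_vector[OF insert.hyps(1) insert.prems(1) insert.hyps(2) insert.prems(2) w(1)]
      by blast
    define w' where "w' l = (if l = a then z else w l + sC (cnj (- phi a (w l))) z)" for l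
    have "w' ` insert a L \<subseteq> W"
      using z(1) w(1) csubspaceD[OF csubspace_W] by (auto simp: w'_def)
    moreover have "phi l (w' l') = of_bool (l = l')" if "l \<in> insert a L" "l' \<in> insert a L" for l l'
    proof (cases "l' = a")
      case True
      then show ?thesis
        using that z insert.hyps(2) by (auto simp: w'_def)
    next
      case False
      then have "l' \<in> L" "l \<in> V" "w l' \<in> W"
        using that insert.prems w(1) by auto
      then have "phi l (w' l') = phi l (w l') - phi a (w l') * phi l z"
        using False z(1) csubspaceD(3)[OF csubspace_W]
        by (simp add: w'_def phi_add_right phi_sC_right)
      then show ?thesis
        using that False z w(2) \<open>l' \<in> L\<close> insert.hyps(2) by auto
    qed
    ultimately show ?case
      by blast
  qed simp
  then show thesis
    using that by blast
qed

lemma indep_mod_transfer: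
  assumes annihilates: "\<And>v n. v \<in> V \<Longrightarrow> n \<in> N \<Longrightarrow> phi v n = 0"
    and "L \<subseteq> V" "indep_mod sC M L"
  obtains K where "K \<subseteq> W" "indep_mod sC N K" "card K = card L"
proof -
  have "finite L"
    using assms(3) by (simp add: indep_mod_def)
  obtain w where w: "w ` L \<subseteq> W" "\<And>l l'. l \<in> L \<Longrightarrow> l' \<in> L \<Longrightarrow> phi l (w l') = of_bool (l = l')"
    using biorthogonal_exists[OF assms(2,3)] by blast
  have "inj_on w L"
  proof (rule inj_onI)
    fix l l'
    assume "l \<in> L" "l' \<in> L" "w l = w l'"
    then show "l = l'"
      using w(2)[of l l] w(2)[of l l'] by auto
  qed
  have "indep_mod sC N (w ` L)"
    unfolding indep_mod_def
  proof (intro conjI allI impI ballI)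
    show "finite (w ` L)"
      using \<open>finite L\<close> by simp
    fix c k
    assume sum_N: "(\<Sum>k\<in>w ` L. sC (c k) k) \<in> N" and "k \<in> w ` L"
    then obtain l0 where "l0 \<in> L" "k = w l0"
      by blast
    have "l0 \<in> V"
      using \<open>l0 \<in> L\<close> assms(2) by auto
    have "0 = phi l0 (0 + (\<Sum>l\<in>L. sC (c (w l)) (w l)))"
      using annihilates[OF \<open>l0 \<in> V\<close> sum_N] by (simp add: sum.reindex[OF \<open>inj_on w L\<close>])
    also have "\<dots> = phi l0 0 + (\<Sum>l\<in>L. cnj (c (w l)) * phi l0 (w l))"
      by (rule phi_combination_right[OF \<open>finite L\<close> w(1) \<open>l0 \<in> V\<close> csubspaceD(1)[OF csubspace_W]])
    also have "\<dots> = (\<Sum>l\<in>L. cnj (c (w l)) * of_bool (l0 = l))"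
      using \<open>l0 \<in> L\<close> \<open>l0 \<in> V\<close> w(2) phi_sC_right[of l0 0 0] csubspaceD(1)[OF csubspace_W] by simp
    also have "\<dots> = cnj (c k)"
      using \<open>finite L\<close> \<open>l0 \<in> L\<close> \<open>k = w l0\<close> by simp
    finally show "c k = 0"
      by simp
  qed
  moreover have "w ` L \<subseteq> W" "card (w ` L) = card L"
    using w(1) card_image[OF \<open>inj_on w L\<close>] by auto
  ultimately show thesis
    using that by blast
qed

lemma quot_dim_le:
  assumes "\<And>v n. v \<in> V \<Longrightarrow> n \<in> N \<Longrightarrow> phi v n = 0"
  shows "quot_dim sC V M \<le> quot_dim sC W N"
  unfolding quot_dim_def
proof (rule Sup_subset_mono, clarify)
  fix L
  assume "L \<subseteq> V" "indep_mod sC M L"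
  then obtain K where "K \<subseteq> W" "indep_mod sC N K" "card K = card L"
    using indep_mod_transfer[OF assms] by blast
  then show "\<exists>K. enat (card L) = enat (card K) \<and> K \<subseteq> W \<and> indep_mod sC N K"
    by (metis)
qed

end

definition boundary_form :: "('a \<Rightarrow> 'a \<Rightarrow> complex) \<Rightarrow> ('a \<times> 'a) set \<Rightarrow> ('a \<times> 'a) set \<Rightarrow> 'a \<Rightarrow> 'a \<Rightarrow> complex" where
  "boundary_form ip A B f g = ip (SOME f'. (f, f') \<in> radj ip A) g - ip f (SOME g'. (g, g') \<in> radj ip B)"

context complex_hilbert
begin

context
  fixes A B :: "('a \<times> 'a) set"
  assumes rmul_A: "rmul (radj ip A) \<subseteq> rmul B" and rmul_B: "rmul (radj ip B) \<subseteq> rmul A"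
begin

lemma boundary_form_eq:
  assumes f: "(f, f') \<in> radj ip A" and g: "(g, g') \<in> radj ip B"
  shows "boundary_form ip A B f g = ip f' g - ip f g'"
proof -
  \<comment> \<open>two choices of \<open>f'\<close> differ by an element of \<open>A\<^sup>*(0) \<subseteq> B(0)\<close>, which is orthogonal to \<open>D(B\<^sup>*)\<close>\<close>
  define F G where "F = (SOME f'. (f, f') \<in> radj ip A)" and "G = (SOME g'. (g, g') \<in> radj ip B)"
  have "(f, F) \<in> radj ip A" "(g, G) \<in> radj ip B"
    unfolding F_def G_def using f g by (auto intro: someI)
  then have "(0, F - f') \<in> radj ip A" "(0, G - g') \<in> radj ip B"
    using lin_rel_diff[OF lin_rel_radj, of f F A f f'] lin_rel_diff[OF lin_rel_radj, of g G B g g'] f g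
    by simp_all
  then have "(0, F - f') \<in> B" "(0, G - g') \<in> A"
    using rmul_A rmul_B by (auto simp: rmul_def)
  then have "ip g' 0 = ip g (F - f')" "ip f' 0 = ip f (G - g')"
    using f g unfolding radj_iff by blast+
  then have "ip F g = ip f' g" "ip f G = ip f g'"
    using ip_sym[of g "F - f'"] by (simp_all add: ip_diff_left ip_diff_right)
  then show ?thesis
    by (simp add: boundary_form_def F_def G_def)
qed

lemma boundary_form_add_left:
  assumes "v1 \<in> rdom (radj ip A)" "v2 \<in> rdom (radj ip A)" "w \<in> rdom (radj ip B)"
  shows "boundary_form ip A B (v1 + v2) w = boundary_form ip A B v1 w + boundary_form ip A B v2 w"
proof -
  obtain v1' v2' w' where v: "(v1, v1') \<in> radj ip A" "(v2, v2') \<in> radj ip A" and w: "(w, w') \<in> radj ip B"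
    using assms by (auto simp: rdom_def)
  then show ?thesis
    using boundary_form_eq[OF lin_rel_add[OF lin_rel_radj v] w] by (simp add: boundary_form_eq ip_add_left)
qed

lemma boundary_form_sC_left:
  assumes "v \<in> rdom (radj ip A)" "w \<in> rdom (radj ip B)"
  shows "boundary_form ip A B (sC c v) w = c * boundary_form ip A B v w"
proof -
  obtain v' w' where v: "(v, v') \<in> radj ip A" and w: "(w, w') \<in> radj ip B"
    using assms by (auto simp: rdom_def)
  then show ?thesis
    using boundary_form_eq[OF lin_rel_sC[OF lin_rel_radj v] w]
    by (simp add: boundary_form_eq ip_sC_left right_diff_distrib)
qed

lemma boundary_form_add_right:
  assumes "v \<in> rdom (radj ip A)" "w1 \<in> rdom (radj ip B)" "w2 \<in> rdom (radj ip B)"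
  shows "boundary_form ip A B v (w1 + w2) = boundary_form ip A B v w1 + boundary_form ip A B v w2"
proof -
  obtain v' w1' w2' where v: "(v, v') \<in> radj ip A" and w: "(w1, w1') \<in> radj ip B" "(w2, w2') \<in> radj ip B"
    using assms by (auto simp: rdom_def)
  then show ?thesis
    using boundary_form_eq[OF v lin_rel_add[OF lin_rel_radj w]] by (simp add: boundary_form_eq ip_add_right)
qed

lemma boundary_form_sC_right:
  assumes "v \<in> rdom (radj ip A)" "w \<in> rdom (radj ip B)"
  shows "boundary_form ip A B v (sC c w) = cnj c * boundary_form ip A B v w"
proof -
  obtain v' w' where v: "(v, v') \<in> radj ip A" and w: "(w, w') \<in> radj ip B"
    using assms by (auto simp: rdom_def)
  then show ?thesis
    using boundary_form_eq[OF v lin_rel_sC[OF lin_rel_radj w]]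
    by (simp add: boundary_form_eq ip_sC_right right_diff_distrib)
qed

lemma rdom_if_boundary_form_vanishes:
  assumes B: "closed_lin_rel sC B" and v: "v \<in> rdom (radj ip A)"
    and vanish: "\<And>w. w \<in> rdom (radj ip B) \<Longrightarrow> boundary_form ip A B v w = 0"
  shows "v \<in> rdom B"
proof -
  obtain v' where v': "(v, v') \<in> radj ip A"
    using v by (auto simp: rdom_def)
  have "(v, v') \<in> radj ip (radj ip B)"
  proof (rule radj_iff[THEN iffD2], intro allI impI)
    fix g g'
    assume g: "(g, g') \<in> radj ip B"
    then have "boundary_form ip A B v g = 0"
      by (intro vanish) (auto simp: rdom_def)
    then show "ip v' g = ip v g'"
      using boundary_form_eq[OF v' g] by simp
  qed
  then show ?thesis
    using radj_radj_subset[OF B] by (auto simp: rdom_def)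
qed

lemma quot_dim_radj_le:
  assumes B: "closed_lin_rel sC B" and AB: "A \<subseteq> radj ip B"
  shows "quot_dim sC (rdom (radj ip A)) (rdom B) \<le> quot_dim sC (rdom (radj ip B)) (rdom A)"
proof -
  interpret sesquilinear_pairing sC ip "rdom (radj ip A)" "rdom (radj ip B)" "rdom B" "boundary_form ip A B"
    by unfold_locales (auto intro: csubspace_rdom lin_rel_radj boundary_form_add_left boundary_form_sC_left
        boundary_form_add_right boundary_form_sC_right rdom_if_boundary_form_vanishes[OF B])
  have "boundary_form ip A B v n = 0" if dom: "v \<in> rdom (radj ip A)" "n \<in> rdom A" for v n
  proof -
    obtain v' n' where v: "(v, v') \<in> radj ip A" and n: "(n, n') \<in> A"
      using dom by (auto simp: rdom_def)
    then show ?thesis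
      using boundary_form_eq[OF v] AB by (auto simp: radj_iff)
  qed
  then show ?thesis
    by (rule quot_dim_le)
qed

end

end

theorem proposition2p5:
  fixes sC :: "complex \<Rightarrow> 'a::banach \<Rightarrow> 'a"
    and ip :: "'a \<Rightarrow> 'a \<Rightarrow> complex"
    and A B :: "('a \<times> 'a) set"
  assumes "complex_hilbert sC ip"
    and "closed_lin_rel sC A" and "closed_lin_rel sC B"
    and "dual_pair sC ip A B"
    and "rrestrict (rs ip (radj ip A)) (rdom B) = rs ip B"
    and "rrestrict (rs ip (radj ip B)) (rdom A) = rs ip A"
    and "rmul (radj ip B) \<inter> rker (radj ip A) = {0}"
    and "rmul (radj ip A) \<inter> rker (radj ip B) = {0}"
  shows "quot_dim sC (rdom (radj ip A)) (rdom B) = quot_dim sC (rdom (radj ip B)) (rdom A)"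
proof -
  interpret complex_hilbert sC ip by fact
  have AB: "A \<subseteq> radj ip B"
    using assms(4) by (simp add: dual_pair_def)
  then have BA: "B \<subseteq> radj ip A"
    by (rule radj_swap)
  have rmul_A: "rmul (radj ip A) \<subseteq> rmul B"
    by (rule rmul_radj_subset[OF assms(3) BA assms(5) assms(8)])
  have rmul_B: "rmul (radj ip B) \<subseteq> rmul A"
    by (rule rmul_radj_subset[OF assms(2) AB assms(6) assms(7)])
  show ?thesis
    using quot_dim_radj_le[OF rmul_A rmul_B assms(3) AB] quot_dim_radj_le[OF rmul_B rmul_A assms(2) BA]
    by (rule antisym)
qed

end
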